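(* $$\sum_{n=1}^\infty(M_e(\mathcal{D},n)-M_o(\mathcal{D},n))q^n=\frac{1}{1+q}\sum_{n=1}^\infty q^{n(3n+1)/2}(1-q^{2n+1})-q(q^2;q)_{\infty}.$$
   Context: $(z;q)_\infty=\prod_{j\ge0}(1-zq^j)$. $M_e(\mathcal{D},n)$ (resp. $M_o(\mathcal{D},n)$) is the number of partitions of $n$ into distinct parts with even (resp. odd) crank, where for a partition into distinct parts the crank is its largest part if $1$ is not a part, and is (number of parts) $-2$ if $1$ is a part. *)

theory Defs
  imports "HOL-Analysis.Analysis"
begin

definition distinct_parts :: "nat \<Rightarrow> nat set set" where
  "distinct_parts n = {S. finite S \<and> 0 \<notin> S \<and> \<Sum>S = n}"

definition dcrank :: "nat set \<Rightarrow> int" where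
  "dcrank S = (if 1 \<in> S then int (card S) - 2 else int (Max S))"

definition Me :: "nat \<Rightarrow> nat" where
  "Me n = card {S \<in> distinct_parts n. even (dcrank S)}"

definition Mo :: "nat \<Rightarrow> nat" where
  "Mo n = card {S \<in> distinct_parts n. odd (dcrank S)}"

end

(*
  Split the distinct partitions by whether 1 is a part.  If it is, the crank has the parity of
  the number of parts, and these partitions contribute -q (q^2;q)_\<infinity>.  Otherwise the crank is
  the largest part; grouping by it gives (1 + q) X = q (1 - \<Sigma>_k (-q)^k (-q;q)_k) for their
  contribution X.  The last series is Fine's function F(-1,0;-q), and iterating two functional
  equations of F turns it into \<Sigma>_k q^(k(3k+5)/2) (1 - q^(k+1)), which telescopes into the
  series on the right-hand side.  Analytically, the N-th partial sum is a signed sum over the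
  subsets of {1..N} minus the subsets with sum > N; with s = sqrt |q| the latter are bounded by
  s^N \<Prod>_j (1 + s^j), hence vanish in the limit.
*)
theory Submission
  imports Defs
begin

(* qprod q a n is the q-Pochhammer symbol (-aq;q)_n, and fineF q a t is Fine's function
   F(-a,0;t) = \<Sigma>_n (-aq;q)_n t^n. *)

definition qprod :: "'a::comm_ring_1 \<Rightarrow> 'a \<Rightarrow> nat \<Rightarrow> 'a" where
  "qprod q a n = (\<Prod>j=1..n. 1 + a * q ^ j)"

definition fineF :: "'a::{real_normed_field,banach} \<Rightarrow> 'a \<Rightarrow> 'a \<Rightarrow> 'a" where
  "fineF q a t = (\<Sum>n. t ^ n * qprod q a n)"

lemma qprod_0 [simp]: "qprod q a 0 = 1"
  by (simp add: qprod_def)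

lemma qprod_Suc: "qprod q a (Suc n) = qprod q a n * (1 + a * q ^ Suc n)"
  by (simp add: qprod_def)

lemma qprod_Suc_shift: "qprod q a (Suc n) = (1 + a * q) * qprod q (a * q) n"
proof -
  have "qprod q a (Suc n) = (1 + a * q) * (\<Prod>j=Suc 1..Suc n. 1 + a * q ^ j)"
    unfolding qprod_def by (subst prod.atLeast_Suc_atMost) auto
  also have "(\<Prod>j=Suc 1..Suc n. 1 + a * q ^ j) = qprod q (a * q) n"
    unfolding qprod_def prod.shift_bounds_cl_Suc_ivl by (simp add: mult_ac)
  finally show ?thesis .
qed

lemma qprod_one_eq:
  assumes "1 \<le> k"
  shows "qprod q 1 k = (1 + q) * (\<Prod>j=2..k. 1 + q ^ j)"
  using assms unfolding qprod_def by (subst prod.atLeast_Suc_atMost) (auto simp: numeral_2_eq_2)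

lemma prod_one_plus_power_le_exp:
  fixes s :: real
  assumes "0 \<le> s" "s < 1"
  shows "(\<Prod>j=1..n. 1 + s ^ j) \<le> exp (1 / (1 - s))"
proof -
  have "(\<Prod>j=1..n. 1 + s ^ j) \<le> (\<Prod>j=1..n. exp (s ^ j))"
    by (intro prod_mono) (use assms in \<open>auto simp: exp_ge_add_one_self\<close>)
  also have "\<dots> = exp (\<Sum>j=1..n. s ^ j)"
    by (simp add: exp_sum)
  also have "\<dots> \<le> exp (\<Sum>j<Suc n. s ^ j)"
    using assms by (subst exp_le_cancel_iff) (rule sum_mono2, auto)
  also have "(\<Sum>j<Suc n. s ^ j) = (1 - s ^ Suc n) / (1 - s)"
    using assms by (subst sum_gp_strict) auto
  also have "\<dots> \<le> 1 / (1 - s)"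
    using assms by (intro divide_right_mono) auto
  finally show ?thesis
    by simp
qed

lemma norm_qprod_le:
  fixes q a :: "'a::real_normed_field"
  assumes "norm q < 1" "norm a \<le> 1"
  shows "norm (qprod q a n) \<le> exp (1 / (1 - norm q))"
proof -
  have "norm (qprod q a n) = (\<Prod>j=1..n. norm (1 + a * q ^ j))"
    by (simp add: qprod_def prod_norm)
  also have "\<dots> \<le> (\<Prod>j=1..n. 1 + norm q ^ j)"
  proof (intro prod_mono conjI)
    fix j
    have "norm (a * q ^ j) \<le> norm q ^ j"
      using assms by (simp add: norm_mult norm_power mult_left_le_one_le)
    then show "norm (1 + a * q ^ j) \<le> 1 + norm q ^ j"
      by (metis add_left_mono norm_one norm_triangle_ineq order_trans)
  qed simp
  also have "\<dots> \<le> exp (1 / (1 - norm q))"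
    using assms by (intro prod_one_plus_power_le_exp) auto
  finally show ?thesis .
qed

lemma norm_fineF_term_le:
  fixes q a t :: "'a::real_normed_field"
  assumes "norm q < 1" "norm a \<le> 1"
  shows "norm (t ^ n * qprod q a n) \<le> exp (1 / (1 - norm q)) * norm t ^ n"
  using norm_qprod_le[OF assms, of n]
  by (simp add: norm_mult norm_power mult.commute mult_left_mono)

lemma summable_fineF:
  fixes q a t :: "'a::{real_normed_field,banach}"
  assumes "norm q < 1" "norm a \<le> 1" "norm t < 1"
  shows "summable (\<lambda>n. t ^ n * qprod q a n)"
  by (rule summable_comparison_test'[OF _ norm_fineF_term_le[OF assms(1,2)]])
     (use assms(3) in \<open>simp add: summable_mult summable_geometric\<close>)

lemma norm_fineF_le:
  fixes q a t :: "'a::{real_normed_field,banach}"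
  assumes "norm q < 1" "norm a \<le> 1" "norm t \<le> r" "r < 1"
  shows "norm (fineF q a t) \<le> exp (1 / (1 - norm q)) / (1 - r)"
proof -
  have "0 \<le> r"
    using assms(3) norm_ge_zero order_trans by blast
  have "norm (fineF q a t) \<le> (\<Sum>n. exp (1 / (1 - norm q)) * r ^ n)"
    unfolding fineF_def
  proof (rule norm_suminf_le)
    show "norm (t ^ n * qprod q a n) \<le> exp (1 / (1 - norm q)) * r ^ n" for n
      using norm_fineF_term_le[OF assms(1,2), of t n] assms(3)
      by (meson exp_ge_zero mult_left_mono norm_ge_zero order_trans power_mono)
    show "summable (\<lambda>n. exp (1 / (1 - norm q)) * r ^ n)"
      using \<open>0 \<le> r\<close> assms(4) by (intro summable_mult summable_geometric) auto
  qed
  also have "\<dots> = exp (1 / (1 - norm q)) / (1 - r)"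
    using \<open>0 \<le> r\<close> assms(4) by (simp add: suminf_mult suminf_geometric divide_simps)
  finally show ?thesis .
qed

lemma fineF_split_head:
  fixes q a t :: "'a::{real_normed_field,banach}"
  assumes "norm q < 1" "norm a \<le> 1" "norm t < 1"
  shows "fineF q a t = 1 + (\<Sum>n. t ^ Suc n * qprod q a (Suc n))"
  using suminf_split_head[OF summable_fineF[OF assms]] by (simp add: fineF_def)

lemma fineF_eq_shift_a:
  fixes q a t :: "'a::{real_normed_field,banach}"
  assumes "norm q < 1" "norm a \<le> 1" "norm t < 1"
  shows "fineF q a t = 1 + t * (1 + a * q) * fineF q (a * q) t"
proof -
  have "norm (a * q) \<le> 1"
    using assms by (simp add: norm_mult mult_le_one)
  then have "(\<lambda>n. t * (1 + a * q) * (t ^ n * qprod q (a * q) n)) sums (t * (1 + a * q) * fineF q (a * q) t)"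
    unfolding fineF_def by (intro sums_mult summable_sums summable_fineF assms)
  then show ?thesis
    unfolding fineF_split_head[OF assms]
    by (simp add: sums_iff qprod_Suc_shift mult_ac)
qed

lemma fineF_eq_shift_t:
  fixes q a t :: "'a::{real_normed_field,banach}"
  assumes "norm q < 1" "norm a \<le> 1" "norm t < 1"
  shows "(1 - t) * fineF q a t = 1 + a * t * q * fineF q a (t * q)"
proof -
  have "norm t * norm q \<le> norm t"
    using assms by (simp add: mult_left_le)
  then have "norm (t * q) < 1"
    using assms by (simp add: norm_mult)
  then have "(\<lambda>n. t * (t ^ n * qprod q a n) + a * t * q * ((t * q) ^ n * qprod q a n))
      sums (t * fineF q a t + a * t * q * fineF q a (t * q))"
    unfolding fineF_def by (intro sums_add sums_mult summable_sums summable_fineF assms)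
  then show ?thesis
    using fineF_split_head[OF assms]
    by (simp add: sums_iff qprod_Suc algebra_simps power_mult_distrib)
qed

lemma fineF_power_recurrence:
  fixes q :: "'a::{real_normed_field,banach}"
  assumes "norm q < 1"
  shows "fineF q (q ^ k) (- (q ^ Suc k))
    = (1 - q ^ Suc k) + q ^ (3 * k + 4) * fineF q (q ^ Suc k) (- (q ^ Suc (Suc k)))"
proof -
  define x where "x = q ^ Suc k"
  define u where "u = fineF q (q ^ k) (- x)"
  define v where "v = fineF q (q ^ k) (- (q * x))"
  define w where "w = fineF q x (- (q * x))"
  have le1: "norm (q ^ n) \<le> 1" for n
    using assms by (simp add: norm_power power_le_one)
  have less1: "norm (q ^ Suc n) < 1" for n
    using assms by (simp add: norm_power power_less_one_iff del: power_Suc)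
  have "(1 + x) * u = 1 - x * x * v"
    using fineF_eq_shift_t[OF assms le1[of k], of "- x"] less1[of k]
    by (simp add: u_def v_def w_def x_def algebra_simps)
  moreover have "v = 1 - q * x * (1 + x) * w"
    using fineF_eq_shift_a[OF assms le1[of k], of "- (q * x)"] less1[of "Suc k"]
    by (simp add: u_def v_def w_def x_def algebra_simps)
  ultimately have "(1 + x) * u = (1 + x) * ((1 - x) + q * x ^ 3 * w)"
    by (simp add: algebra_simps power3_eq_cube)
  moreover have "1 + x \<noteq> 0"
    using less1[of k] unfolding x_def by (metis add_eq_0_iff norm_minus_cancel norm_one less_irrefl)
  moreover have "q ^ (3 * k + 4) = q * x ^ 3"
    by (simp add: x_def flip: power_mult power_Suc) (simp add: algebra_simps)
  ultimately show ?thesis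
    by (simp add: u_def v_def w_def x_def)
qed

lemma sums_of_linear_recurrence:
  fixes u a c :: "nat \<Rightarrow> 'a::{comm_ring_1,topological_ab_group_add}"
  assumes "\<And>k. u k = a k + c k * u (Suc k)"
    and "(\<lambda>K. (\<Prod>i<K. c i) * u K) \<longlonglongrightarrow> 0"
  shows "(\<lambda>k. (\<Prod>i<k. c i) * a k) sums u 0"
proof -
  have unrolled: "u 0 = (\<Sum>k<K. (\<Prod>i<k. c i) * a k) + (\<Prod>i<K. c i) * u K" for K
  proof (induction K)
    case (Suc K)
    then show ?case
      using assms(1)[of K] by (simp add: algebra_simps)
  qed simp
  have "(\<Sum>k<K. (\<Prod>i<k. c i) * a k) = u 0 - (\<Prod>i<K. c i) * u K" for K
    by (subst unrolled[of K]) simp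
  moreover have "(\<lambda>K. u 0 - (\<Prod>i<K. c i) * u K) \<longlonglongrightarrow> u 0 - 0"
    by (intro tendsto_diff tendsto_const assms(2))
  ultimately show ?thesis
    unfolding sums_def by simp
qed

lemma Suc_mult_3_Suc_plus_5_div_2:
  "Suc k * (3 * Suc k + 5) div 2 = k * (3 * k + 5) div 2 + (3 * k + 4)"
proof -
  have "Suc k * (3 * Suc k + 5) = k * (3 * k + 5) + 2 * (3 * k + 4)"
    by (simp add: algebra_simps)
  then show ?thesis
    by simp
qed

lemma prod_power_3i_4: "(\<Prod>i<k. q ^ (3 * i + 4)) = q ^ (k * (3 * k + 5) div 2)"
proof (induction k)
  case (Suc k)
  then show ?case
    by (simp only: prod.lessThan_Suc Suc_mult_3_Suc_plus_5_div_2 power_add)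
qed simp

lemma fineF_one_sums:
  fixes q :: "'a::{real_normed_field,banach}"
  assumes "norm q < 1"
  shows "(\<lambda>k. q ^ (k * (3 * k + 5) div 2) * (1 - q ^ Suc k)) sums fineF q 1 (- q)"
proof -
  define u where "u k = fineF q (q ^ k) (- (q ^ Suc k))" for k
  define C where "C = exp (1 / (1 - norm q)) / (1 - norm q)"
  have u_bound: "norm (u K) \<le> C" for K
    unfolding u_def C_def
  proof (rule norm_fineF_le[OF assms _ _ assms])
    show "norm (q ^ K) \<le> 1"
      using assms by (simp add: norm_power power_le_one)
    show "norm (- (q ^ Suc K)) \<le> norm q"
      using assms power_decreasing[of 1 "Suc K" "norm q"] by (simp add: norm_power del: power_Suc)
  qed
  have remainder_bound: "norm (q ^ (K * (3 * K + 5) div 2) * u K) \<le> norm q ^ K * C" for K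
  proof -
    have "K \<le> K * (3 * K + 5) div 2"
      by (simp add: less_eq_div_iff_mult_less_eq)
    then have "norm q ^ (K * (3 * K + 5) div 2) \<le> norm q ^ K"
      using assms by (intro power_decreasing) auto
    then show ?thesis
      unfolding norm_mult norm_power by (rule mult_mono) (auto intro: u_bound)
  qed
  have "(\<lambda>K. norm q ^ K * C) \<longlonglongrightarrow> 0"
    using assms by (intro tendsto_mult_left_zero LIMSEQ_power_zero) auto
  then have "(\<lambda>K. (\<Prod>i<K. q ^ (3 * i + 4)) * u K) \<longlonglongrightarrow> 0"
    unfolding prod_power_3i_4 by (rule Lim_null_comparison[OF always_eventually, OF allI, OF remainder_bound])
  then have "(\<lambda>k. (\<Prod>i<k. q ^ (3 * i + 4)) * (1 - q ^ Suc k)) sums u 0"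
    by (rule sums_of_linear_recurrence[rotated]) (unfold u_def, rule fineF_power_recurrence[OF assms])
  then show ?thesis
    by (simp add: u_def prod_power_3i_4)
qed

lemma summable_power_exponent_ge:
  fixes q :: "'a::{real_normed_div_algebra,banach}"
  assumes "norm q < 1" "\<And>n. n \<le> g n"
  shows "summable (\<lambda>n. q ^ g n)"
proof (rule summable_comparison_test')
  show "summable (\<lambda>n. norm q ^ n)"
    using assms by (intro summable_geometric) auto
  show "norm (q ^ g n) \<le> norm q ^ n" for n
    using assms by (simp add: norm_power power_decreasing)
qed

lemma pentagonal_sums:
  fixes q :: "'a::{real_normed_field,banach}"
  assumes "norm q < 1"
  shows "(\<lambda>n. q ^ (Suc n * (3 * Suc n + 1) div 2) * (1 - q ^ (2 * Suc n + 1)))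
    sums (q * (1 - fineF q 1 (- q)))"
proof -
  define e :: "nat \<Rightarrow> nat" where "e k = k * (3 * k + 5) div 2" for k
  have e_Suc: "e (Suc k) = e k + 3 * k + 4" for k
    unfolding e_def Suc_mult_3_Suc_plus_5_div_2 by simp
  have pent_e: "Suc n * (3 * Suc n + 1) div 2 = e n + n + 2" for n
  proof -
    have "Suc n * (3 * Suc n + 1) = n * (3 * n + 5) + 2 * (n + 2)"
      by (simp add: algebra_simps)
    then show ?thesis
      unfolding e_def by simp
  qed
  have e_ge: "k \<le> e k" for k
    by (simp add: e_def less_eq_div_iff_mult_less_eq)
  \<comment> \<open>With n = k + 1, H k and G k are q^(n(3n-1)/2) and q^(n(3n+1)/2).\<close>
  define H where "H k = q ^ (e k + 1)" for k
  define G where "G k = q ^ (e k + k + 2)" for k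
  have "summable H" "summable G"
    unfolding H_def G_def using e_ge by (auto intro!: summable_power_exponent_ge assms le_SucI)
  then have HG: "(\<lambda>k. H k - G k) sums (suminf H - suminf G)"
    and GH: "(\<lambda>n. G n - H (Suc n)) sums (suminf G - (suminf H - H 0))"
    by (auto intro!: sums_diff summable_sums simp: sums_Suc_iff)
  have "(\<lambda>k. H k - G k) sums (q * fineF q 1 (- q))"
    using sums_mult[OF fineF_one_sums[OF assms], of q]
    by (simp add: H_def G_def e_def algebra_simps power_add)
  with HG have "suminf H - suminf G = q * fineF q 1 (- q)"
    by (rule sums_unique2)
  moreover have "H 0 = q"
    by (simp add: H_def e_def)
  ultimately have sum_eq: "suminf G - (suminf H - H 0) = q * (1 - fineF q 1 (- q))"
    by (simp add: algebra_simps)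
  have "G n - H (Suc n) = q ^ (Suc n * (3 * Suc n + 1) div 2) * (1 - q ^ (2 * Suc n + 1))" for n
  proof -
    have "e (Suc n) + 1 = (e n + n + 2) + (2 * Suc n + 1)"
      by (simp add: e_Suc)
    then show ?thesis
      unfolding G_def H_def pent_e by (simp only: power_add right_diff_distrib mult_1_right)
  qed
  with GH show ?thesis
    unfolding sum_eq by simp
qed

definition crank_sign :: "nat set \<Rightarrow> 'a::comm_ring_1" where
  "crank_sign S = (if even (dcrank S) then 1 else -1)"

lemma distinct_parts_subset:
  assumes "S \<in> distinct_parts n"
  shows "S \<subseteq> {1..n}"
proof
  fix x
  assume "x \<in> S"
  moreover have "finite S" "0 \<notin> S" "\<Sum>S = n"
    using assms by (auto simp: distinct_parts_def)
  ultimately show "x \<in> {1..n}"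
    using member_le_sum[of x S id] by (cases x) auto
qed

lemma finite_distinct_parts: "finite (distinct_parts n)"
  by (rule finite_subset[of _ "Pow {1..n}"]) (use distinct_parts_subset in blast, simp)

lemma of_int_Me_minus_Mo:
  "of_int (int (Me n) - int (Mo n)) = (\<Sum>S\<in>distinct_parts n. crank_sign S :: 'a::comm_ring_1)"
  unfolding crank_sign_def Me_def Mo_def
  by (simp add: sum.If_cases finite_distinct_parts Int_def conj_commute)

lemma distinct_parts_eq_Pow:
  assumes "n \<le> N"
  shows "distinct_parts n = {S\<in>Pow {1..N}. \<Sum>S = n}"
proof (intro equalityI subsetI)
  fix S
  assume "S \<in> distinct_parts n"
  then show "S \<in> {S\<in>Pow {1..N}. \<Sum>S = n}"
    using distinct_parts_subset[of S n] assms by (auto simp: distinct_parts_def)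
next
  fix S
  assume "S \<in> {S\<in>Pow {1..N}. \<Sum>S = n}"
  then show "S \<in> distinct_parts n"
    by (auto simp: distinct_parts_def dest: finite_subset)
qed

lemma sum_distinct_parts_upto:
  "(\<Sum>n=1..N. \<Sum>S\<in>distinct_parts n. w S) = (\<Sum>S\<in>{S\<in>Pow {1..N}. S \<noteq> {} \<and> \<Sum>S \<le> N}. w S)"
proof -
  define W where "W = {S\<in>Pow {1..N}. S \<noteq> {} \<and> \<Sum>S \<le> N}"
  have "Sum ` W \<subseteq> {1..N}"
  proof
    fix m
    assume "m \<in> Sum ` W"
    then obtain S x where "S \<in> W" "m = \<Sum>S" "x \<in> S"
      by (auto simp: W_def)
    moreover from this have "finite S" "S \<subseteq> {1..N}"
      by (auto simp: W_def intro: finite_subset)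
    ultimately show "m \<in> {1..N}"
      using member_le_sum[of x S id] by (force simp: W_def)
  qed
  then have "(\<Sum>S\<in>W. w S) = (\<Sum>n=1..N. \<Sum>S\<in>{S\<in>W. \<Sum>S = n}. w S)"
    by (intro sum.group[symmetric]) (auto simp: W_def)
  also have "\<dots> = (\<Sum>n=1..N. \<Sum>S\<in>distinct_parts n. w S)"
  proof (intro sum.cong refl)
    fix n
    assume n: "n \<in> {1..N}"
    then have "n \<le> N"
      by simp
    show "{S\<in>W. \<Sum>S = n} = distinct_parts n"
      unfolding distinct_parts_eq_Pow[OF \<open>n \<le> N\<close>] W_def using n by auto
  qed
  finally show ?thesis
    by (simp add: W_def)
qed

lemma sum_Pow_insert_nonempty:
  assumes "finite A" "a \<notin> A"
  shows "(\<Sum>S\<in>Pow (insert a A) - {{}}. h S) = (\<Sum>T\<in>Pow A. h (insert a T)) + (\<Sum>S\<in>Pow A - {{}}. h S)"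
proof -
  have "inj_on (insert a) (Pow A)"
    using assms(2) by (intro inj_onI) (metis PowD insert_ident subset_iff)
  moreover have "Pow (insert a A) - {{}} = insert a ` Pow A \<union> (Pow A - {{}})"
    by (auto simp: Pow_insert)
  moreover have "insert a ` Pow A \<inter> (Pow A - {{}}) = {}"
    using assms(2) by auto
  ultimately show ?thesis
    using assms(1) by (simp add: sum.union_disjoint sum.reindex)
qed

lemma sum_Pow_nonempty_by_Max:
  fixes a N :: nat
  shows "(\<Sum>S\<in>Pow {a..N} - {{}}. h S) = (\<Sum>m=a..N. \<Sum>T\<in>Pow {a..<m}. h (insert m T))"
proof (induction N)
  case 0
  have "Pow {0::nat} - {{}} = {{0}}"
    by auto
  then show ?case
    by (cases a) auto
next
  case (Suc N)
  show ?case
  proof (cases "a \<le> Suc N")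
    case True
    then have "{a..Suc N} = insert (Suc N) {a..N}"
      by auto
    then show ?thesis
      using Suc True by (simp add: sum_Pow_insert_nonempty atLeastLessThanSuc_atLeastAtMost add.commute)
  qed simp
qed

lemma sum_Pow_power_Sum:
  fixes x :: "'a::comm_semiring_1"
  assumes "finite A"
  shows "(\<Sum>S\<in>Pow A. x ^ \<Sum>S) = (\<Prod>j\<in>A. 1 + x ^ j)"
  using prod_add[OF assms, of "\<lambda>j. x ^ j" "\<lambda>_. 1"] by (simp add: power_sum add.commute)

lemma sum_Pow_signed_power_Sum:
  fixes x :: "'a::comm_ring_1"
  assumes "finite A"
  shows "(\<Sum>S\<in>Pow A. (-1) ^ card S * x ^ \<Sum>S) = (\<Prod>j\<in>A. 1 - x ^ j)"
  using prod_diff_conv_sum[OF assms, of "\<lambda>_. 1" "\<lambda>j. x ^ j"] by (simp add: power_sum)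

lemma crank_sign_insert_1:
  assumes "finite T" "1 \<notin> T"
  shows "crank_sign (insert 1 T) = - ((-1) ^ card T)"
  using assms by (cases "even (card T)") (auto simp: crank_sign_def dcrank_def even_diff)

lemma crank_sign_without_1:
  assumes "1 \<notin> S"
  shows "crank_sign S = (-1) ^ Max S"
  using assms by (simp add: crank_sign_def dcrank_def minus_one_power_iff)

lemma sum_crank_subsets_with_1:
  fixes q :: "'a::comm_ring_1"
  shows "(\<Sum>T\<in>Pow {2..N}. crank_sign (insert 1 T) * q ^ \<Sum>(insert 1 T)) = - q * (\<Prod>j=2..N. 1 - q ^ j)"
proof -
  have term_eq: "crank_sign (insert 1 T) * q ^ \<Sum>(insert 1 T) = - q * ((-1) ^ card T * q ^ \<Sum>T)"
    if "T \<in> Pow {2..N}" for T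
  proof -
    from that have "finite T" "1 \<notin> T"
      by (auto dest: finite_subset)
    then have "crank_sign (insert 1 T) = - ((-1) ^ card T :: 'a)" "\<Sum>(insert 1 T) = 1 + \<Sum>T"
      by (rule crank_sign_insert_1, simp)
    then show ?thesis
      by (simp add: power_add)
  qed
  have "(\<Sum>T\<in>Pow {2..N}. crank_sign (insert 1 T) * q ^ \<Sum>(insert 1 T))
      = - q * (\<Sum>T\<in>Pow {2..N}. (-1) ^ card T * q ^ \<Sum>T)"
    unfolding sum_distrib_left by (rule sum.cong[OF refl term_eq])
  then show ?thesis
    by (simp add: sum_Pow_signed_power_Sum)
qed

lemma sum_crank_subsets_with_Max:
  fixes q :: "'a::comm_ring_1"
  assumes "2 \<le> m"
  shows "(\<Sum>T\<in>Pow {2..<m}. crank_sign (insert m T) * q ^ \<Sum>(insert m T)) = (- q) ^ m * (\<Prod>j=2..<m. 1 + q ^ j)"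
proof -
  have "crank_sign (insert m T) * q ^ \<Sum>(insert m T) = (- q) ^ m * q ^ \<Sum>T" if "T \<in> Pow {2..<m}" for T
  proof -
    from that have "finite T" "m \<notin> T" "1 \<notin> insert m T"
      using assms by (auto dest: finite_subset)
    moreover have "Max (insert m T) = m"
      using that \<open>finite T\<close> by (intro Max_eqI) auto
    ultimately show ?thesis
      by (simp add: crank_sign_without_1 power_add power_minus')
  qed
  then have "(\<Sum>T\<in>Pow {2..<m}. crank_sign (insert m T) * q ^ \<Sum>(insert m T))
      = (- q) ^ m * (\<Sum>T\<in>Pow {2..<m}. q ^ \<Sum>T)"
    unfolding sum_distrib_left by (rule sum.cong[OF refl])
  then show ?thesis
    by (simp add: sum_Pow_power_Sum)
qed

lemma sum_crank_subsets_without_1: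
  fixes q :: "'a::comm_ring_1"
  shows "(1 + q) * (\<Sum>S\<in>Pow {2..Suc N} - {{}}. crank_sign S * q ^ \<Sum>S)
    = q * (1 - (\<Sum>k<Suc N. (- q) ^ k * qprod q 1 k))"
proof -
  have shift: "(\<Sum>m=2..Suc N. g m) = (\<Sum>k=1..N. g (Suc k))" for g :: "nat \<Rightarrow> 'a"
    using sum.shift_bounds_cl_Suc_ivl[of g 1 N] by (simp only: Suc_1)
  have "(\<Sum>S\<in>Pow {2..Suc N} - {{}}. crank_sign S * q ^ \<Sum>S)
      = (\<Sum>m=2..Suc N. (- q) ^ m * (\<Prod>j=2..<m. 1 + q ^ j))"
    unfolding sum_Pow_nonempty_by_Max by (intro sum.cong refl sum_crank_subsets_with_Max) auto
  also have "\<dots> = (\<Sum>k=1..N. (- q) ^ Suc k * (\<Prod>j=2..k. 1 + q ^ j))"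
    by (simp only: shift atLeastLessThanSuc_atLeastAtMost)
  finally have "(\<Sum>S\<in>Pow {2..Suc N} - {{}}. crank_sign S * q ^ \<Sum>S)
      = (\<Sum>k=1..N. (- q) ^ Suc k * (\<Prod>j=2..k. 1 + q ^ j))" .
  moreover have "(1 + q) * (\<Sum>k=1..N. (- q) ^ Suc k * (\<Prod>j=2..k. 1 + q ^ j))
      = - q * (\<Sum>k=1..N. (- q) ^ k * qprod q 1 k)"
    unfolding sum_distrib_left by (intro sum.cong refl) (simp add: qprod_one_eq)
  moreover have "(\<Sum>k<Suc N. (- q) ^ k * qprod q 1 k) = 1 + (\<Sum>k=1..N. (- q) ^ k * qprod q 1 k)"
    by (simp add: lessThan_Suc_atMost atMost_atLeast0 sum.atLeast_Suc_atMost)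
  ultimately show ?thesis
    by (simp add: algebra_simps)
qed

lemma sum_crank_nonempty_subsets:
  fixes q :: "'a::field"
  assumes "1 + q \<noteq> 0"
  shows "(\<Sum>S\<in>Pow {1..Suc N} - {{}}. crank_sign S * q ^ \<Sum>S)
    = q * (1 - (\<Sum>k<Suc N. (- q) ^ k * qprod q 1 k)) / (1 + q) - q * (\<Prod>i<N. 1 - q ^ (i + 2))"
proof -
  have "{2..Suc N} = {0 + 2..<N + 2}"
    by auto
  then have prod_eq: "(\<Prod>j=2..Suc N. 1 - q ^ j) = (\<Prod>i<N. 1 - q ^ (i + 2))"
    by (simp only: prod.shift_bounds_nat_ivl lessThan_atLeast0)
  have "{1..Suc N} = insert 1 {2..Suc N}"
    by auto
  then have "(\<Sum>S\<in>Pow {1..Suc N} - {{}}. crank_sign S * q ^ \<Sum>S)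
      = (\<Sum>T\<in>Pow {2..Suc N}. crank_sign (insert 1 T) * q ^ \<Sum>(insert 1 T))
        + (\<Sum>S\<in>Pow {2..Suc N} - {{}}. crank_sign S * q ^ \<Sum>S)"
    by (simp add: sum_Pow_insert_nonempty)
  also have "(\<Sum>T\<in>Pow {2..Suc N}. crank_sign (insert 1 T) * q ^ \<Sum>(insert 1 T))
      = - q * (\<Prod>i<N. 1 - q ^ (i + 2))"
    by (simp only: sum_crank_subsets_with_1 prod_eq)
  also have "(\<Sum>S\<in>Pow {2..Suc N} - {{}}. crank_sign S * q ^ \<Sum>S)
      = q * (1 - (\<Sum>k<Suc N. (- q) ^ k * qprod q 1 k)) / (1 + q)"
    by (subst sum_crank_subsets_without_1[symmetric]) (simp add: assms)
  finally show ?thesis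
    by (simp add: algebra_simps)
qed

lemma tendsto_prod_one_minus_power:
  fixes q :: "'a::{real_normed_field,banach}"
  assumes "norm q < 1"
  shows "(\<lambda>N. \<Prod>i<N. 1 - q ^ (i + m)) \<longlonglongrightarrow> (\<Prod>i. 1 - q ^ (i + m))"
proof -
  have "summable (\<lambda>i. norm (1 - q ^ (i + m) - 1))"
    using summable_mult[OF summable_geometric[of "norm q"], of "norm q ^ m"] assms
    by (simp add: norm_mult norm_power power_add mult_ac)
  then have "convergent_prod (\<lambda>i. 1 - q ^ (i + m))"
    by (intro abs_convergent_prod_imp_convergent_prod summable_imp_abs_convergent_prod)
  then show ?thesis
    by (simp add: LIMSEQ_lessThan_iff_atMost convergent_prod_LIMSEQ)
qed

lemma crank_partial_sum:
  fixes q :: "'a::comm_ring_1"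
  shows "(\<Sum>n<N. of_int (int (Me (Suc n)) - int (Mo (Suc n))) * q ^ Suc n)
    = (\<Sum>S\<in>Pow {1..N} - {{}}. crank_sign S * q ^ \<Sum>S) - (\<Sum>S\<in>{S\<in>Pow {1..N}. N < \<Sum>S}. crank_sign S * q ^ \<Sum>S)"
proof -
  have "(\<Sum>n<N. of_int (int (Me (Suc n)) - int (Mo (Suc n))) * q ^ Suc n)
      = (\<Sum>n=1..N. of_int (int (Me n) - int (Mo n)) * q ^ n)"
    by (simp only: One_nat_def sum.atLeast1_atMost_eq)
  also have "\<dots> = (\<Sum>n=1..N. \<Sum>S\<in>distinct_parts n. crank_sign S * q ^ \<Sum>S)"
  proof (intro sum.cong refl)
    fix n
    have "(\<Sum>S\<in>distinct_parts n. crank_sign S * q ^ \<Sum>S) = (\<Sum>S\<in>distinct_parts n. crank_sign S) * q ^ n"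
      unfolding sum_distrib_right by (intro sum.cong refl) (simp add: distinct_parts_def)
    then show "of_int (int (Me n) - int (Mo n)) * q ^ n = (\<Sum>S\<in>distinct_parts n. crank_sign S * q ^ \<Sum>S)"
      by (simp only: of_int_Me_minus_Mo)
  qed
  also have "\<dots> = (\<Sum>S\<in>(Pow {1..N} - {{}}) - {S\<in>Pow {1..N}. N < \<Sum>S}. crank_sign S * q ^ \<Sum>S)"
    unfolding sum_distinct_parts_upto by (intro sum.cong) auto
  also have "\<dots> = (\<Sum>S\<in>Pow {1..N} - {{}}. crank_sign S * q ^ \<Sum>S) - (\<Sum>S\<in>{S\<in>Pow {1..N}. N < \<Sum>S}. crank_sign S * q ^ \<Sum>S)"
    by (intro sum_diff) auto
  finally show ?thesis .
qed

lemma tendsto_sum_Pow_Sum_gt_zero: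
  fixes q :: "'a::real_normed_field" and w :: "nat set \<Rightarrow> 'a"
  assumes "norm q < 1" "\<And>S. norm (w S) \<le> 1"
  shows "(\<lambda>N. \<Sum>S\<in>{S\<in>Pow {1..N}. N < \<Sum>S}. w S * q ^ \<Sum>S) \<longlonglongrightarrow> 0"
proof (rule Lim_null_comparison)
  define s where "s = sqrt (norm q)"
  have "0 \<le> s" "s < 1"
    using assms by (auto simp: s_def real_sqrt_lt_1_iff)
  have "norm (\<Sum>S\<in>{S\<in>Pow {1..N}. N < \<Sum>S}. w S * q ^ \<Sum>S) \<le> s ^ N * exp (1 / (1 - s))" for N
  proof -
    have "norm (\<Sum>S\<in>{S\<in>Pow {1..N}. N < \<Sum>S}. w S * q ^ \<Sum>S)
        \<le> (\<Sum>S\<in>{S\<in>Pow {1..N}. N < \<Sum>S}. norm (w S * q ^ \<Sum>S))"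
      by (rule norm_sum)
    also have "\<dots> \<le> (\<Sum>S\<in>{S\<in>Pow {1..N}. N < \<Sum>S}. s ^ N * s ^ \<Sum>S)"
    proof (rule sum_mono)
      fix S
      assume "S \<in> {S\<in>Pow {1..N}. N < \<Sum>S}"
      then have "s ^ (2 * \<Sum>S) \<le> s ^ (N + \<Sum>S)"
        using \<open>0 \<le> s\<close> \<open>s < 1\<close> by (intro power_decreasing) auto
      moreover have "norm (w S * q ^ \<Sum>S) \<le> norm q ^ \<Sum>S"
        using assms(2)[of S] by (simp add: norm_mult norm_power mult_left_le_one_le)
      ultimately show "norm (w S * q ^ \<Sum>S) \<le> s ^ N * s ^ \<Sum>S"
        by (simp add: s_def power_mult power_add)
    qed
    also have "\<dots> \<le> (\<Sum>S\<in>Pow {1..N}. s ^ N * s ^ \<Sum>S)"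
      using \<open>0 \<le> s\<close> by (intro sum_mono2) auto
    also have "\<dots> = s ^ N * (\<Prod>j=1..N. 1 + s ^ j)"
      by (simp add: sum_Pow_power_Sum flip: sum_distrib_left)
    also have "\<dots> \<le> s ^ N * exp (1 / (1 - s))"
      using \<open>0 \<le> s\<close> \<open>s < 1\<close> by (intro mult_left_mono prod_one_plus_power_le_exp) auto
    finally show ?thesis .
  qed
  then show "\<forall>\<^sub>F N in sequentially. norm (\<Sum>S\<in>{S\<in>Pow {1..N}. N < \<Sum>S}. w S * q ^ \<Sum>S) \<le> s ^ N * exp (1 / (1 - s))"
    by simp
  show "(\<lambda>N. s ^ N * exp (1 / (1 - s))) \<longlonglongrightarrow> 0"
    using \<open>0 \<le> s\<close> \<open>s < 1\<close> by (intro tendsto_mult_left_zero LIMSEQ_power_zero) auto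
qed

lemma crank_difference_sums:
  fixes q :: "'a::{real_normed_field,banach}"
  assumes "norm q < 1"
  shows "(\<lambda>n. of_int (int (Me (Suc n)) - int (Mo (Suc n))) * q ^ Suc n)
    sums (q * (1 - fineF q 1 (- q)) / (1 + q) - q * prodinf (\<lambda>j. 1 - q ^ (j + 2)))"
proof -
  define R where "R N = (\<Sum>S\<in>{S\<in>Pow {1..N}. N < \<Sum>S}. crank_sign S * q ^ \<Sum>S)" for N
  define F where "F N = (\<Sum>k<N. (- q) ^ k * qprod q 1 k)" for N
  have "1 + q \<noteq> 0"
    using assms by (metis add_eq_0_iff norm_minus_cancel norm_one less_irrefl)
  have partial: "(\<Sum>n<Suc N. of_int (int (Me (Suc n)) - int (Mo (Suc n))) * q ^ Suc n)
      = q * (1 - F (Suc N)) / (1 + q) - q * (\<Prod>i<N. 1 - q ^ (i + 2)) - R (Suc N)" for N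
    unfolding crank_partial_sum sum_crank_nonempty_subsets[OF \<open>1 + q \<noteq> 0\<close>] R_def F_def
    by (rule refl)
  have "(\<lambda>N. F (Suc N)) \<longlonglongrightarrow> fineF q 1 (- q)"
    unfolding F_def fineF_def using assms
    by (intro LIMSEQ_Suc summable_LIMSEQ summable_fineF) auto
  moreover have "(\<lambda>N. R (Suc N)) \<longlonglongrightarrow> 0"
    unfolding R_def using assms
    by (intro LIMSEQ_Suc tendsto_sum_Pow_Sum_gt_zero) (auto simp: crank_sign_def)
  ultimately have "(\<lambda>N. q * (1 - F (Suc N)) / (1 + q) - q * (\<Prod>i<N. 1 - q ^ (i + 2)) - R (Suc N))
      \<longlonglongrightarrow> q * (1 - fineF q 1 (- q)) / (1 + q) - q * prodinf (\<lambda>j. 1 - q ^ (j + 2)) - 0"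
    using \<open>1 + q \<noteq> 0\<close> tendsto_prod_one_minus_power[OF assms] by (intro tendsto_intros)
  then show ?thesis
    unfolding sums_def partial[symmetric] diff_zero by (rule LIMSEQ_imp_Suc)
qed

theorem theorem5p1:
  fixes q :: complex
  assumes "norm q < 1"
  shows "(\<Sum>n. of_int (int (Me (Suc n)) - int (Mo (Suc n))) * q ^ Suc n)
    = 1 / (1 + q) * (\<Sum>n. q ^ (Suc n * (3 * Suc n + 1) div 2) * (1 - q ^ (2 * Suc n + 1)))
      - q * prodinf (\<lambda>j. 1 - q ^ (j + 2))"
  using sums_unique[OF crank_difference_sums[OF assms]] sums_unique[OF pentagonal_sums[OF assms]]
  by simp

end
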